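(* Let $n\ge 1$ and let $f\in\mathcal{G}_1$ be $n$-ary, $f=2x_1\cdots x_n\left(\sum_{i=1}^n a_ix_i^2+\sum_{i=1}^n b_ix_i+c\right)$, with $a_i\ne 0$ for some $i$. If $f\in\mathcal{G}_0$, then $C(f)=C(2w_n)$. If $f\in\mathcal{G}_1\setminus\mathcal{G}_0$, then $C(f)=C(2q_n)$.
   Context: All operations are on $\mathbb{Z}_8$. $\mathcal{G}_1$ is the set of all operations (of any arity $n\ge1$) given by $2x_1\cdots x_n\left(\sum_{i=1}^n a_ix_i^2+\sum_{i=1}^n b_ix_i+c\right)$ with $a_i,b_i\in\{0,1\}$ and $c\in\{0,1,2,3\}$; $\mathcal{G}_0$ is the subset of those for which $\sum_{i=1}^na_i+\sum_{i=1}^nb_i+c$ is even. For an operation $f$, $C(f)$ denotes the clone generated by $f$ together with binary addition and all unary constant operations. $w_n=x_1\cdots x_n(x_1^2+1)$, $q_n=x_1^3x_2\cdots x_n$. *)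

theory Defs
  imports Main "HOL-Library.Numeral_Type"
begin

text \<open>Elements of Z_8 are the elements of the ring type 8 (integers modulo 8).
An m-ary operation is a function (nat => 8) => 8 reading its arguments x 0, ..., x (m-1).
A generating operation is a pair (arity k, function).\<close>

type_synonym z8 = "8"
type_synonym z8op = "(nat \<Rightarrow> z8) \<Rightarrow> z8"

inductive_set clone_gen :: "(nat \<times> z8op) set \<Rightarrow> nat \<Rightarrow> z8op set"
  for F :: "(nat \<times> z8op) set" and m :: nat where
  proj: "i < m \<Longrightarrow> (\<lambda>x. x i) \<in> clone_gen F m"
| comp: "(k, g) \<in> F \<Longrightarrow> (\<And>j. j < k \<Longrightarrow> h j \<in> clone_gen F m) \<Longrightarrow>
          (\<lambda>x. g (\<lambda>j. if j < k then h j x else 0)) \<in> clone_gen F m"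

definition clone_of :: "(nat \<times> z8op) set \<Rightarrow> (nat \<times> z8op) set" where
  "clone_of F = {(m, h). 1 \<le> m \<and> h \<in> clone_gen F m}"

definition C :: "nat \<Rightarrow> z8op \<Rightarrow> (nat \<times> z8op) set" where
  "C k f = clone_of ({(k, f), (2, \<lambda>x. x 0 + x 1)} \<union> {(1, \<lambda>x. c) | c. True})"

text \<open>The operation 2 x_1...x_n (sum a_i x_i^2 + sum b_i x_i + c) (indices shifted to 0..n-1).\<close>
definition gop :: "nat \<Rightarrow> (nat \<Rightarrow> nat) \<Rightarrow> (nat \<Rightarrow> nat) \<Rightarrow> nat \<Rightarrow> z8op" where
  "gop n a b c = (\<lambda>x. 2 * (\<Prod>i<n. x i) *
      ((\<Sum>i<n. of_nat (a i) * x i ^ 2) + (\<Sum>i<n. of_nat (b i) * x i) + of_nat c))"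

definition in_G1 :: "nat \<Rightarrow> (nat \<Rightarrow> nat) \<Rightarrow> (nat \<Rightarrow> nat) \<Rightarrow> nat \<Rightarrow> bool" where
  "in_G1 n a b c \<longleftrightarrow> (\<forall>i<n. a i \<in> {0,1} \<and> b i \<in> {0,1}) \<and> c \<in> {0,1,2,3}"

definition in_G0 :: "nat \<Rightarrow> (nat \<Rightarrow> nat) \<Rightarrow> (nat \<Rightarrow> nat) \<Rightarrow> nat \<Rightarrow> bool" where
  "in_G0 n a b c \<longleftrightarrow> in_G1 n a b c \<and> even ((\<Sum>i<n. a i) + (\<Sum>i<n. b i) + c)"

text \<open>w_n = x_1...x_n (x_1^2 + 1), q_n = x_1^3 x_2 ... x_n (indices shifted to 0..n-1).\<close>
definition w_op :: "nat \<Rightarrow> z8op" where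
  "w_op n = (\<lambda>x. (\<Prod>i<n. x i) * (x 0 ^ 2 + 1))"

definition q_op :: "nat \<Rightarrow> z8op" where
  "q_op n = (\<lambda>x. x 0 ^ 3 * (\<Prod>i\<in>{1..<n}. x i))"

end

theory Submission
  imports Defs "HOL-Combinatorics.Permutations"
begin

text \<open>
  Put \<open>P = 2 x\<^sub>1\<cdots>x\<^sub>n\<close>, \<open>M = 4 x\<^sub>1\<cdots>x\<^sub>n\<close>, \<open>D\<^sub>k = P (1 - x\<^sub>k\<^sup>2)\<close> and
  \<open>H\<^sub>k = P (x\<^sub>k - x\<^sub>k\<^sup>2)\<close>. Since \<open>2 x\<^sub>1\<cdots>x\<^sub>n x\<^sub>k\<^sup>2 = P - D\<^sub>k\<close> and
  \<open>2 x\<^sub>1\<cdots>x\<^sub>n x\<^sub>k = P - D\<^sub>k + H\<^sub>k\<close>, every \<open>f\<close> in \<open>\<G>\<^sub>1\<close> is the linear combination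
  \<open>f = S P + \<Sum>\<^sub>i (b\<^sub>i H\<^sub>i - (a\<^sub>i + b\<^sub>i) D\<^sub>i)\<close> with \<open>S = \<Sum> a\<^sub>i + \<Sum> b\<^sub>i + c\<close>, and \<open>f \<in> \<G>\<^sub>0\<close>
  iff \<open>S\<close> is even. In a clone containing addition and the constants, a single \<open>D\<^sub>k\<close> yields
  all \<open>D\<^sub>i\<close> (permuting variables), all \<open>H\<^sub>i\<close> (\<open>x\<^sub>i \<mapsto> x\<^sub>i - 1\<close>) and \<open>M\<close> (\<open>x\<^sub>k \<mapsto> 2 x\<^sub>k\<close>), and
  a second difference of \<open>f\<close> in a variable with \<open>a\<^sub>k = 1\<close> yields \<open>D\<^sub>k\<close>.

  If \<open>S\<close> is even then \<open>S P = (S/2) M\<close>, so \<open>C(f)\<close> is generated by \<open>D\<^sub>1\<close> and \<open>M\<close>; so is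
  \<open>C(2w\<^sub>n)\<close>, because \<open>2w\<^sub>n = M - D\<^sub>1\<close> and \<open>2w\<^sub>n(2x\<^sub>1, x\<^sub>2, \<dots>) = M\<close>. If \<open>S\<close> is odd then
  \<open>S\<close> is a unit of \<open>\<int>\<^sub>8\<close> (\<open>S\<^sup>2 = 1\<close>), so \<open>P\<close> lies in \<open>C(f)\<close> and \<open>C(f)\<close> is generated
  by \<open>D\<^sub>1\<close> and \<open>P\<close>; so is \<open>C(2q\<^sub>n)\<close>, because \<open>2q\<^sub>n = P - D\<^sub>1\<close> and \<open>P\<close> is a
  combination of substitution instances of \<open>2q\<^sub>n\<close>.
\<close>

lemma forall_z8: "(\<forall>x::z8. P x) \<longleftrightarrow> P 0 \<and> P 1 \<and> P 2 \<and> P 3 \<and> P 4 \<and> P 5 \<and> P 6 \<and> P 7"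
proof
  assume h: "P 0 \<and> P 1 \<and> P 2 \<and> P 3 \<and> P 4 \<and> P 5 \<and> P 6 \<and> P 7"
  show "\<forall>x::z8. P x"
  proof
    fix x :: z8
    obtain z where z: "x = of_int z" "0 \<le> z" "z < 8"
      by (cases x rule: bit0_cases) auto
    then have "z \<in> {0,1,2,3,4,5,6,7}" by auto
    then show "P x" using h z(1) by auto
  qed
qed auto

lemma z8_of_nat_surj: "\<exists>N. (u::z8) = of_nat N"
proof -
  obtain z where "u = of_int z" "0 \<le> z"
    by (cases u rule: bit0_cases) auto
  then show ?thesis by (metis of_int_of_nat_eq nonneg_int_cases)
qed

lemma prod_lessThan_fun_upd:
  fixes x :: "nat \<Rightarrow> 'a::comm_monoid_mult"
  assumes "k < n"
  shows "(\<Prod>i<n. (x(k := u)) i) = u * (\<Prod>i\<in>{..<n} - {k}. x i)"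
proof -
  have "(\<Prod>i\<in>{..<n} - {k}. (x(k := u)) i) = (\<Prod>i\<in>{..<n} - {k}. x i)"
    by (rule prod.cong) auto
  then show ?thesis using assms by (simp add: prod.remove[of "{..<n}" k])
qed

lemma prod_lessThan_remove:
  fixes x :: "nat \<Rightarrow> 'a::comm_monoid_mult"
  assumes "k < n"
  shows "(\<Prod>i<n. x i) = x k * (\<Prod>i\<in>{..<n} - {k}. x i)"
  using prod_lessThan_fun_upd[OF assms, of x "x k"] by simp

lemma prod_lessThan_eq_atLeastLessThan:
  fixes x :: "nat \<Rightarrow> 'a::comm_monoid_mult"
  assumes "1 \<le> n"
  shows "(\<Prod>i<n. x i) = x 0 * (\<Prod>i\<in>{1..<n}. x i)"
proof -
  have "{..<n} - {0} = {1..<n}" by auto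
  then show ?thesis using prod_lessThan_remove[of 0 n x] assms by simp
qed

section \<open>Clones containing addition and the constants\<close>

definition depends_only_on :: "nat \<Rightarrow> z8op \<Rightarrow> bool" where
  "depends_only_on k g \<longleftrightarrow> (\<forall>y z. (\<forall>j<k. y j = z j) \<longrightarrow> g y = g z)"

lemma clone_gen_comp:
  assumes "g \<in> clone_gen F k" and "\<And>j. j < k \<Longrightarrow> h j \<in> clone_gen F m"
  shows "(\<lambda>x. g (\<lambda>j. h j x)) \<in> clone_gen F m"
  using assms
proof induction
  case (proj i)
  then show ?case by simp
next
  case (comp k' g' h')
  then show ?case
    using clone_gen.comp[of k' g' F "\<lambda>j x. h' j (\<lambda>j. h j x)" m] by simp
qed

lemma clone_gen_fun_upd2:
  assumes "g \<in> clone_gen F m" and "A \<in> clone_gen F m" and "B \<in> clone_gen F m"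
  shows "(\<lambda>x. g (x(k := A x, l := B x))) \<in> clone_gen F m"
proof -
  have "(\<lambda>x. g (\<lambda>j. (if j = l then B else if j = k then A else (\<lambda>x. x j)) x)) \<in> clone_gen F m"
    by (rule clone_gen_comp[OF assms(1)]) (use assms in \<open>auto intro: clone_gen.proj\<close>)
  moreover have "(\<lambda>j. (if j = l then B else if j = k then A else (\<lambda>x. x j)) x) = x(k := A x, l := B x)"
    for x by auto
  ultimately show ?thesis by simp
qed

lemma clone_gen_fun_upd:
  assumes "g \<in> clone_gen F m" and "A \<in> clone_gen F m"
  shows "(\<lambda>x. g (x(k := A x))) \<in> clone_gen F m"
  using clone_gen_fun_upd2[OF assms assms(2), of k k] by simp

lemma clone_gen_generator:
  assumes "(k, g) \<in> F" and "depends_only_on k g"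
  shows "g \<in> clone_gen F k"
proof -
  have "(\<lambda>x. g (\<lambda>j. if j < k then x j else 0)) \<in> clone_gen F k"
    by (rule clone_gen.comp[OF assms(1)]) (rule clone_gen.proj)
  moreover have "(\<lambda>x. g (\<lambda>j. if j < k then x j else 0)) = g"
    using assms(2) unfolding depends_only_on_def by (auto intro!: ext)
  ultimately show ?thesis by simp
qed

lemma clone_gen_mono:
  assumes "\<And>k g. (k, g) \<in> F \<Longrightarrow> g \<in> clone_gen G k"
  shows "clone_gen F m \<subseteq> clone_gen G m"
proof
  fix h assume "h \<in> clone_gen F m"
  then show "h \<in> clone_gen G m"
  proof induction
    case (proj i)
    then show ?case by (rule clone_gen.proj)
  next
    case (comp k g h)
    then show ?case
      using clone_gen_comp[OF assms[OF comp(1)], of "\<lambda>j x. if j < k then h j x else 0"] by simp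
  qed
qed

locale add_const_generators =
  fixes F :: "(nat \<times> z8op) set"
  assumes add_generator: "(2, \<lambda>x. x 0 + x 1) \<in> F"
    and const_generator: "\<And>c. (1, \<lambda>x. c) \<in> F"
begin

lemma const_in:
  assumes "g \<in> clone_gen F m"
  shows "(\<lambda>x. c) \<in> clone_gen F m"
proof -
  have "(\<lambda>x. c) \<in> clone_gen F 1"
    by (rule clone_gen_generator[OF const_generator]) (simp add: depends_only_on_def)
  from clone_gen_comp[OF this, of "\<lambda>_. g"] assms show ?thesis by simp
qed

lemma add_in:
  assumes "g \<in> clone_gen F m" and "h \<in> clone_gen F m"
  shows "(\<lambda>x. g x + h x) \<in> clone_gen F m"
proof -
  have "(\<lambda>x. x 0 + x 1) \<in> clone_gen F 2"
    by (rule clone_gen_generator[OF add_generator]) (simp add: depends_only_on_def)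
  from clone_gen_comp[OF this, of "\<lambda>j. if j = 0 then g else h"] assms show ?thesis by simp
qed

lemma add_const_in:
  assumes "g \<in> clone_gen F m"
  shows "(\<lambda>x. g x + u) \<in> clone_gen F m"
  using add_in[OF assms const_in[OF assms]] .

lemma mult_in:
  assumes "g \<in> clone_gen F m"
  shows "(\<lambda>x. u * g x) \<in> clone_gen F m"
proof -
  obtain N where "u = of_nat N" using z8_of_nat_surj by blast
  have "(\<lambda>x. of_nat N * g x) \<in> clone_gen F m"
  proof (induction N)
    case 0
    then show ?case using const_in[OF assms, of 0] by simp
  next
    case (Suc N)
    then show ?case using add_in[OF Suc assms] by (simp add: algebra_simps)
  qed
  then show ?thesis using \<open>u = of_nat N\<close> by simp
qed

lemma diff_in:
  assumes "g \<in> clone_gen F m" and "h \<in> clone_gen F m"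
  shows "(\<lambda>x. g x - h x) \<in> clone_gen F m"
  using add_in[OF assms(1) mult_in[OF assms(2), of "-1"]] by simp

lemma sum_in:
  assumes "finite A" and "0 < m" and "\<And>i. i \<in> A \<Longrightarrow> g i \<in> clone_gen F m"
  shows "(\<lambda>x. \<Sum>i\<in>A. g i x) \<in> clone_gen F m"
  using assms(1,3)
proof induction
  case empty
  then show ?case using const_in[OF clone_gen.proj[OF assms(2)], of 0] by simp
next
  case (insert i A)
  then show ?case using add_in[of "g i" m "\<lambda>x. \<Sum>i\<in>A. g i x"] by simp
qed

end

definition C_gens :: "nat \<Rightarrow> z8op \<Rightarrow> (nat \<times> z8op) set" where
  "C_gens k f = {(k, f), (2, \<lambda>x. x 0 + x 1)} \<union> {(1, \<lambda>x. c) | c. True}"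

interpretation C_gens: add_const_generators "C_gens k f" for k f
  by unfold_locales (auto simp: C_gens_def)

lemma generator_in_C_gens:
  assumes "depends_only_on k f"
  shows "f \<in> clone_gen (C_gens k f) k"
  by (rule clone_gen_generator[OF _ assms]) (simp add: C_gens_def)

lemma C_mono:
  assumes "f \<in> clone_gen (C_gens n g) n"
  shows "C n f \<subseteq> C n g"
proof -
  have "h \<in> clone_gen (C_gens n g) k" if "(k, h) \<in> C_gens n f" for k h
  proof -
    have x0: "(\<lambda>x. x 0) \<in> clone_gen (C_gens n g) k" if "0 < k" for k
      using clone_gen.proj[OF that] .
    from that have "(k, h) = (n, f) \<or> (k, h) = (2, \<lambda>x. x 0 + x 1) \<or> (\<exists>c. (k, h) = (1, \<lambda>x. c))"
      by (auto simp: C_gens_def)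
    then show ?thesis
      using assms C_gens.add_in[OF x0 clone_gen.proj[of 1 2]] C_gens.const_in[OF x0] by auto
  qed
  then show ?thesis
    unfolding C_def clone_of_def C_gens_def[symmetric] using clone_gen_mono by blast
qed

lemma C_eqI:
  assumes "f \<in> clone_gen (C_gens n g) n" and "g \<in> clone_gen (C_gens n f) n"
  shows "C n f = C n g"
  using C_mono[OF assms(1)] C_mono[OF assms(2)] by blast

section \<open>The operations \<open>P\<close>, \<open>M\<close>, \<open>D\<^sub>k\<close> and \<open>H\<^sub>k\<close>\<close>

definition P_op :: "nat \<Rightarrow> z8op" where
  "P_op n x = 2 * (\<Prod>i<n. x i)"

definition M_op :: "nat \<Rightarrow> z8op" where
  "M_op n x = 4 * (\<Prod>i<n. x i)"

definition D_op :: "nat \<Rightarrow> nat \<Rightarrow> z8op" where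
  "D_op n k x = 2 * (\<Prod>i<n. x i) * (1 - x k ^ 2)"

definition H_op :: "nat \<Rightarrow> nat \<Rightarrow> z8op" where
  "H_op n k x = 2 * (\<Prod>i<n. x i) * (x k - x k ^ 2)"

lemma D_op_fun_upd:
  assumes "k < n"
  shows "D_op n k (x(k := u)) = 2 * u * (1 - u ^ 2) * (\<Prod>i\<in>{..<n} - {k}. x i)"
  unfolding D_op_def prod_lessThan_fun_upd[OF assms] by (simp add: algebra_simps)

lemma D_op_shift_eq_H_op:
  assumes "k < n"
  shows "D_op n k (x(k := x k - 1)) = H_op n k x"
proof -
  have shift: "2 * (u - 1) * (1 - (u - 1) ^ 2) = 2 * u * (u - u ^ 2)" for u :: z8
    using forall_z8[of "\<lambda>u. 2 * (u - 1) * (1 - (u - 1) ^ 2) = 2 * u * (u - u ^ 2)"] by simp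
  show ?thesis
    unfolding D_op_fun_upd[OF assms] shift H_op_def prod_lessThan_remove[OF assms, of x]
    by (simp add: algebra_simps)
qed

lemma D_op_double_eq_M_op:
  assumes "k < n"
  shows "D_op n k (x(k := x k + x k)) = M_op n x"
proof -
  have double: "2 * (u + u) * (1 - (u + u) ^ 2) = 4 * u" for u :: z8
    using forall_z8[of "\<lambda>u. 2 * (u + u) * (1 - (u + u) ^ 2) = 4 * u"] by simp
  show ?thesis
    unfolding D_op_fun_upd[OF assms] double M_op_def prod_lessThan_remove[OF assms, of x]
    by (simp add: algebra_simps)
qed

lemma D_op_transpose:
  assumes "k < n" and "i < n"
  shows "D_op n k (x \<circ> transpose k i) = D_op n i x"
proof -
  have "(\<Prod>j<n. (x \<circ> transpose k i) j) = (\<Prod>j<n. x j)"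
    using prod.permute[OF permutes_swap_id[of k "{..<n}" i], of x] assms by simp
  then show ?thesis unfolding D_op_def by simp
qed

lemma w_op_eq:
  assumes "1 \<le> n"
  shows "2 * w_op n x = M_op n x - D_op n 0 x"
  unfolding w_op_def M_op_def D_op_def by (simp add: algebra_simps)

lemma w_op_double:
  assumes "1 \<le> n"
  shows "2 * w_op n (x(0 := x 0 + x 0)) = M_op n x"
proof -
  have double: "2 * (u + u) * ((u + u) ^ 2 + 1) = 4 * u" for u :: z8
    using forall_z8[of "\<lambda>u. 2 * (u + u) * ((u + u) ^ 2 + 1) = 4 * u"] by simp
  from assms have n: "0 < n" by simp
  have "2 * w_op n (x(0 := x 0 + x 0)) = 2 * (x 0 + x 0) * ((x 0 + x 0) ^ 2 + 1) * (\<Prod>i\<in>{..<n} - {0}. x i)"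
    unfolding w_op_def prod_lessThan_fun_upd[OF n] by (simp add: algebra_simps)
  also have "\<dots> = M_op n x"
    unfolding double M_op_def prod_lessThan_remove[OF n, of x] by (simp add: algebra_simps)
  finally show ?thesis .
qed

lemma q_op_eq:
  assumes "1 \<le> n"
  shows "2 * q_op n x = P_op n x - D_op n 0 x"
  unfolding q_op_def P_op_def D_op_def prod_lessThan_eq_atLeastLessThan[OF assms]
  by (simp add: algebra_simps power2_eq_square power3_eq_cube)

lemma q_op_fun_upd:
  assumes "2 \<le> n"
  shows "q_op n (x(0 := u, 1 := v)) = u ^ 3 * v * (\<Prod>i\<in>{2..<n}. x i)"
proof -
  have "{1..<n} = insert 1 {2..<n}" using assms by auto
  moreover have "(\<Prod>i\<in>{2..<n}. (x(0 := u, 1 := v)) i) = (\<Prod>i\<in>{2..<n}. x i)"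
    by (rule prod.cong) auto
  ultimately show ?thesis unfolding q_op_def by simp
qed

lemma P_op_polarization:
  assumes "2 \<le> n"
  shows "P_op n x = 3 * (2 * q_op n (x(0 := x 1 + 2, 1 := x 0 + 1)))
    + 2 * q_op n (x(0 := x 0 + 2, 1 := x 0 + x 1 + 3))
    - 2 * q_op n (x(0 := x 0 + x 1 + 2, 1 := x 0 + 3))"
proof -
  have "\<forall>u v::z8. 2 * u * v = 3 * (2 * (v + 2) ^ 3 * (u + 1)) + 2 * (u + 2) ^ 3 * (u + v + 3)
      - 2 * (u + v + 2) ^ 3 * (u + 3)"
    unfolding forall_z8 by simp
  then have polar: "2 * x 0 * x 1 = 3 * (2 * (x 1 + 2) ^ 3 * (x 0 + 1)) + 2 * (x 0 + 2) ^ 3 * (x 0 + x 1 + 3)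
      - 2 * (x 0 + x 1 + 2) ^ 3 * (x 0 + 3)"
    by blast
  from assms have "1 \<le> n" by simp
  have "{1..<n} = insert 1 {2..<n}" using assms by auto
  then have "P_op n x = 2 * x 0 * x 1 * (\<Prod>i\<in>{2..<n}. x i)"
    unfolding P_op_def prod_lessThan_eq_atLeastLessThan[OF \<open>1 \<le> n\<close>] by (simp add: algebra_simps)
  then show ?thesis
    unfolding q_op_fun_upd[OF assms] polar by (simp add: algebra_simps)
qed

lemma P_op_one: "P_op 1 = (\<lambda>x. x 0 + x 0)"
  by (simp add: P_op_def fun_eq_iff)

lemma gop_fun_upd:
  assumes "k < n"
  obtains T where "\<And>u. gop n a b c (y(k := u))
    = 2 * u * (\<Prod>j\<in>{..<n} - {k}. y j) * (of_nat (a k) * u ^ 2 + of_nat (b k) * u + T)"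
proof
  fix u
  let ?y = "y(k := u)"
  have "(\<Sum>j\<in>{..<n} - {k}. of_nat (a j) * ?y j ^ 2) = (\<Sum>j\<in>{..<n} - {k}. of_nat (a j) * y j ^ 2)"
    "(\<Sum>j\<in>{..<n} - {k}. of_nat (b j) * ?y j) = (\<Sum>j\<in>{..<n} - {k}. of_nat (b j) * y j)"
    by (auto intro: sum.cong)
  then show "gop n a b c ?y = 2 * u * (\<Prod>j\<in>{..<n} - {k}. y j) * (of_nat (a k) * u ^ 2 + of_nat (b k) * u
      + ((\<Sum>j\<in>{..<n} - {k}. of_nat (a j) * y j ^ 2) + (\<Sum>j\<in>{..<n} - {k}. of_nat (b j) * y j) + of_nat c))"
    using assms unfolding gop_def prod_lessThan_fun_upd[OF assms]
    by (simp add: sum.remove[of "{..<n}" k] algebra_simps)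
qed

lemma gop_second_difference:
  assumes "k < n" and "a k = 1"
  shows "gop n a b c (y(k := u + v)) - gop n a b c (y(k := u)) - gop n a b c (y(k := v))
    = 2 * u * v * (3 * (u + v) + 2 * of_nat (b k)) * (\<Prod>j\<in>{..<n} - {k}. y j)"
proof -
  obtain T where T: "\<And>u. gop n a b c (y(k := u))
    = 2 * u * (\<Prod>j\<in>{..<n} - {k}. y j) * (of_nat (a k) * u ^ 2 + of_nat (b k) * u + T)"
    using gop_fun_upd[OF assms(1)] by blast
  show ?thesis unfolding T assms(2) by (simp add: algebra_simps power2_eq_square)
qed

text \<open>
  With \<open>y = x(l := x\<^sub>k + 1)\<close>, the variable \<open>x\<^sub>k\<close> enters \<open>f(y)\<close> as
  \<open>2 R x\<^sub>k (x\<^sub>k\<^sup>2 + b\<^sub>k x\<^sub>k + T)\<close> with \<open>R, T\<close> free of \<open>x\<^sub>k\<close>; the second difference in \<open>x\<^sub>k\<close>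
  cancels the part linear in \<open>x\<^sub>k\<close>, and modulo 8 the remainder is \<open>D\<^sub>k(x)\<close>.
\<close>

lemma D_op_polarization:
  assumes "k < n" and "l < n" and "k \<noteq> l" and "a k = 1" and "b k \<le> 1"
  shows "D_op n k x = gop n a b c (x(l := x k + 1, k := x k + x l))
    - gop n a b c (x(l := x k + 1, k := x k)) - gop n a b c (x(l := x k + 1, k := x l))"
proof -
  define R where "R = (\<Prod>j\<in>{..<n} - {k} - {l}. x j)"
  have key: "2 * u * v * (3 * (u + v) + 2 * \<beta>) * (u + 1) = 2 * u * (1 - u ^ 2) * v"
    if "\<beta> = 0 \<or> \<beta> = 1" for u v \<beta> :: z8
  proof -
    have "\<forall>u v::z8. 2 * u * v * (3 * (u + v)) * (u + 1) = 2 * u * (1 - u ^ 2) * v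
        \<and> 2 * u * v * (3 * (u + v) + 2) * (u + 1) = 2 * u * (1 - u ^ 2) * v"
      unfolding forall_z8 by simp
    with that show ?thesis by auto
  qed
  have l_mem: "l \<in> {..<n} - {k}" using assms(2,3) by simp
  have "(\<Prod>j\<in>{..<n} - {k}. (x(l := x k + 1)) j) = (x k + 1) * R"
  proof -
    have "(\<Prod>j\<in>{..<n} - {k} - {l}. (x(l := x k + 1)) j) = R"
      unfolding R_def by (rule prod.cong) auto
    then show ?thesis using prod.remove[OF _ l_mem, of "x(l := x k + 1)"] by simp
  qed
  then have "gop n a b c (x(l := x k + 1, k := x k + x l))
      - gop n a b c (x(l := x k + 1, k := x k)) - gop n a b c (x(l := x k + 1, k := x l))
      = 2 * x k * x l * (3 * (x k + x l) + 2 * of_nat (b k)) * (x k + 1) * R"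
    unfolding gop_second_difference[where a = a, OF assms(1,4)] by (simp add: algebra_simps)
  also have "\<dots> = 2 * x k * (1 - x k ^ 2) * x l * R"
    using key[of "of_nat (b k)" "x k" "x l"] assms(5) by (cases "b k") auto
  also have "\<dots> = D_op n k x"
  proof -
    have "(\<Prod>j\<in>{..<n} - {k}. x j) = x l * R"
      unfolding R_def using prod.remove[OF _ l_mem, of x] by simp
    then show ?thesis
      unfolding D_op_def prod_lessThan_remove[OF assms(1), of x] by (simp add: algebra_simps)
  qed
  finally show ?thesis by simp
qed

lemma D_op_one_if_b0:
  assumes "a 0 = 1" and "b 0 = 0"
  shows "D_op 1 0 x = (2 + 2 * of_nat c) * x 0 - gop 1 a b c x"
  by (simp add: D_op_def gop_def assms algebra_simps power2_eq_square)

lemma D_op_one_if_b1: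
  assumes "a 0 = 1" and "b 0 = 1"
  shows "D_op 1 0 x = (4 + 2 * of_nat c) * (x 0 + 1) - gop 1 a b c (x(0 := x 0 + 1))"
proof -
  have "\<forall>u \<gamma>::z8. 2 * u * (1 - u ^ 2) = (4 + 2 * \<gamma>) * (u + 1) - 2 * (u + 1) * ((u + 1) ^ 2 + (u + 1) + \<gamma>)"
    unfolding forall_z8 by simp
  then have "2 * x 0 * (1 - x 0 ^ 2)
      = (4 + 2 * of_nat c) * (x 0 + 1) - 2 * (x 0 + 1) * ((x 0 + 1) ^ 2 + (x 0 + 1) + of_nat c)"
    by blast
  then show ?thesis by (simp add: D_op_def gop_def assms)
qed

definition coeff_sum :: "nat \<Rightarrow> (nat \<Rightarrow> nat) \<Rightarrow> (nat \<Rightarrow> nat) \<Rightarrow> nat \<Rightarrow> nat" where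
  "coeff_sum n a b c = (\<Sum>i<n. a i) + (\<Sum>i<n. b i) + c"

lemma gop_decomposition:
  "gop n a b c x = of_nat (coeff_sum n a b c) * P_op n x
    + (\<Sum>i<n. of_nat (b i) * H_op n i x - of_nat (a i + b i) * D_op n i x)"
proof -
  have square: "2 * (\<Prod>j<n. x j) * x i ^ 2 = P_op n x - D_op n i x" for i
    unfolding P_op_def D_op_def by (simp add: algebra_simps)
  have linear: "2 * (\<Prod>j<n. x j) * x i = P_op n x - D_op n i x + H_op n i x" for i
    unfolding P_op_def D_op_def H_op_def by (simp add: algebra_simps)
  have "gop n a b c x = (\<Sum>i<n. of_nat (a i) * (2 * (\<Prod>j<n. x j) * x i ^ 2))
      + (\<Sum>i<n. of_nat (b i) * (2 * (\<Prod>j<n. x j) * x i)) + of_nat c * P_op n x"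
    unfolding gop_def P_op_def by (simp add: sum_distrib_left algebra_simps)
  also have "\<dots> = (\<Sum>i<n. of_nat (a i) * (P_op n x - D_op n i x))
      + (\<Sum>i<n. of_nat (b i) * (P_op n x - D_op n i x + H_op n i x)) + of_nat c * P_op n x"
    unfolding square linear ..
  also have "\<dots> = of_nat (coeff_sum n a b c) * P_op n x
    + (\<Sum>i<n. of_nat (b i) * H_op n i x - of_nat (a i + b i) * D_op n i x)"
    by (simp add: coeff_sum_def sum.distrib sum_subtractf sum_distrib_left sum_distrib_right algebra_simps)
  finally show ?thesis .
qed

lemma even_mult_P_op:
  assumes "even N"
  shows "of_nat N * P_op n x = of_nat (N div 2) * M_op n x"
  using assms by (elim evenE) (simp add: P_op_def M_op_def)

lemma odd_square_z8:
  assumes "odd N"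
  shows "(of_nat N :: z8) * of_nat N = 1"
proof -
  have "\<forall>u::z8. (1 + 2 * u) * (1 + 2 * u) = 1" unfolding forall_z8 by simp
  with assms show ?thesis by (elim oddE) simp
qed

context add_const_generators
begin

lemma D_op_in_transpose:
  assumes "D_op n k \<in> clone_gen F n" and "k < n" and "i < n"
  shows "D_op n i \<in> clone_gen F n"
proof -
  have "(\<lambda>x. D_op n k (\<lambda>j. x (transpose k i j))) \<in> clone_gen F n"
    by (rule clone_gen_comp[OF assms(1)])
      (use assms(2,3) in \<open>auto simp: transpose_def intro: clone_gen.proj\<close>)
  moreover have "D_op n k (\<lambda>j. x (transpose k i j)) = D_op n i x" for x
    using D_op_transpose[OF assms(2,3)] unfolding comp_def .
  ultimately show ?thesis by simp
qed

lemma H_op_in: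
  assumes "D_op n i \<in> clone_gen F n" and "i < n"
  shows "H_op n i \<in> clone_gen F n"
proof -
  have "(\<lambda>x. D_op n i (x(i := x i + - 1))) \<in> clone_gen F n"
    using clone_gen_fun_upd[OF assms(1) add_const_in[OF clone_gen.proj[OF assms(2)]]] .
  then show ?thesis using D_op_shift_eq_H_op[OF assms(2)] by simp
qed

lemma M_op_in:
  assumes "D_op n k \<in> clone_gen F n" and "k < n"
  shows "M_op n \<in> clone_gen F n"
proof -
  have "(\<lambda>x. D_op n k (x(k := x k + x k))) \<in> clone_gen F n"
    using clone_gen_fun_upd[OF assms(1) add_in[OF clone_gen.proj[OF assms(2)] clone_gen.proj[OF assms(2)]]]
    .
  then show ?thesis using D_op_double_eq_M_op[OF assms(2)] by simp
qed

lemma gop_minus_P_op_in: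
  assumes "D_op n k \<in> clone_gen F n" and "k < n"
  shows "(\<lambda>x. gop n a b c x - of_nat (coeff_sum n a b c) * P_op n x) \<in> clone_gen F n"
proof -
  have "D_op n i \<in> clone_gen F n" "H_op n i \<in> clone_gen F n" if "i < n" for i
    using D_op_in_transpose[OF assms that] H_op_in[OF D_op_in_transpose[OF assms that] that] by auto
  then have "(\<lambda>x. \<Sum>i<n. of_nat (b i) * H_op n i x - of_nat (a i + b i) * D_op n i x) \<in> clone_gen F n"
    using assms(2) by (intro sum_in diff_in mult_in) auto
  then show ?thesis unfolding gop_decomposition[of n a b c] by simp
qed

lemma gop_in_if_P_op_in:
  assumes "D_op n k \<in> clone_gen F n" and "k < n" and "P_op n \<in> clone_gen F n"
  shows "gop n a b c \<in> clone_gen F n"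
  using add_in[OF gop_minus_P_op_in[where a = a and b = b and c = c, OF assms(1,2)]
      mult_in[OF assms(3), of "of_nat (coeff_sum n a b c)"]]
  by simp

lemma gop_in_if_even:
  assumes "D_op n k \<in> clone_gen F n" and "k < n" and "even (coeff_sum n a b c)"
  shows "gop n a b c \<in> clone_gen F n"
  using add_in[OF gop_minus_P_op_in[where a = a and b = b and c = c, OF assms(1,2)]
      mult_in[OF M_op_in[OF assms(1,2)], of "of_nat (coeff_sum n a b c div 2)"]]
  by (simp add: even_mult_P_op[OF assms(3)])

lemma P_op_in_if_odd:
  assumes "D_op n k \<in> clone_gen F n" and "k < n" and "odd (coeff_sum n a b c)"
    and "gop n a b c \<in> clone_gen F n"
  shows "P_op n \<in> clone_gen F n"
proof -
  let ?S = "coeff_sum n a b c"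
  have "(\<lambda>x. of_nat ?S * (gop n a b c x - (gop n a b c x - of_nat ?S * P_op n x))) \<in> clone_gen F n"
    using mult_in[OF diff_in[OF assms(4) gop_minus_P_op_in[where a = a and b = b and c = c, OF assms(1,2)]]]
    .
  then show ?thesis by (simp add: mult.assoc[symmetric] odd_square_z8[OF assms(3)])
qed

end

section \<open>The clones \<open>C(f)\<close>, \<open>C(2w\<^sub>n)\<close> and \<open>C(2q\<^sub>n)\<close>\<close>

lemma depends_only_on_gop: "depends_only_on n (gop n a b c)"
  unfolding depends_only_on_def gop_def by (auto intro!: arg_cong2[where f = "(*)"] prod.cong sum.cong)

lemma depends_only_on_w_op:
  assumes "1 \<le> n"
  shows "depends_only_on n (\<lambda>x. 2 * w_op n x)"
  using assms unfolding depends_only_on_def w_op_def by (auto intro!: prod.cong)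

lemma depends_only_on_q_op:
  assumes "1 \<le> n"
  shows "depends_only_on n (\<lambda>x. 2 * q_op n x)"
  using assms unfolding depends_only_on_def q_op_def by (auto intro!: prod.cong)

lemma D_op_in_C_gens_gop:
  assumes "1 \<le> n" and "in_G1 n a b c" and "k < n" and "a k \<noteq> 0"
  shows "D_op n k \<in> clone_gen (C_gens n (gop n a b c)) n"
proof -
  let ?K = "clone_gen (C_gens n (gop n a b c)) n"
  have f: "gop n a b c \<in> ?K" by (rule generator_in_C_gens[OF depends_only_on_gop])
  have ak: "a k = 1" and bk: "b k \<le> 1" using assms(2-4) unfolding in_G1_def by auto
  show ?thesis
  proof (cases "2 \<le> n")
    case True
    define l :: nat where "l = (if k = 0 then 1 else 0)"
    have l: "l < n" "k \<noteq> l" using True by (auto simp: l_def)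
    have "(\<lambda>x. gop n a b c (x(l := x k + 1, k := x k + x l)) - gop n a b c (x(l := x k + 1, k := x k))
        - gop n a b c (x(l := x k + 1, k := x l))) \<in> ?K"
      using assms(3) l(1)
      by (intro C_gens.diff_in clone_gen_fun_upd2 f C_gens.add_const_in C_gens.add_in clone_gen.proj)
    then show ?thesis using D_op_polarization[where a = a and b = b, OF assms(3) l ak bk] by simp
  next
    case False
    then have n: "n = 1" and k: "k = 0" using assms(1,3) by auto
    have x0: "(\<lambda>x. x 0) \<in> ?K" by (rule clone_gen.proj) (simp add: n)
    from ak k have a0: "a 0 = 1" by simp
    from bk k have "b 0 = 0 \<or> b 0 = 1" by auto
    then show ?thesis
    proof
      assume b0: "b 0 = 0"
      have "(\<lambda>x. (2 + 2 * of_nat c) * x 0 - gop n a b c x) \<in> ?K"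
        by (intro C_gens.diff_in C_gens.mult_in x0 f)
      then show ?thesis unfolding n k using D_op_one_if_b0[where a = a and b = b, OF a0 b0] by simp
    next
      assume b0: "b 0 = 1"
      have "(\<lambda>x. (4 + 2 * of_nat c) * (x 0 + 1) - gop n a b c (x(0 := x 0 + 1))) \<in> ?K"
        by (intro C_gens.diff_in C_gens.mult_in clone_gen_fun_upd f C_gens.add_const_in x0)
      then show ?thesis unfolding n k using D_op_one_if_b1[where a = a and b = b, OF a0 b0] by simp
    qed
  qed
qed

lemma D_op_in_C_gens_w_op:
  assumes "1 \<le> n"
  shows "D_op n 0 \<in> clone_gen (C_gens n (\<lambda>x. 2 * w_op n x)) n"
proof -
  let ?K = "clone_gen (C_gens n (\<lambda>x. 2 * w_op n x)) n"
  have w: "(\<lambda>x. 2 * w_op n x) \<in> ?K" by (rule generator_in_C_gens[OF depends_only_on_w_op[OF assms]])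
  have n: "0 < n" using assms by simp
  have "(\<lambda>x. 2 * w_op n (x(0 := x 0 + x 0))) \<in> ?K"
    using clone_gen_fun_upd[OF w C_gens.add_in[OF clone_gen.proj[OF n] clone_gen.proj[OF n]]] .
  then have "M_op n \<in> ?K" using w_op_double[OF assms] by simp
  from C_gens.diff_in[OF this w] show ?thesis using w_op_eq[OF assms] by simp
qed

lemma P_op_in_C_gens_q_op:
  assumes "1 \<le> n"
  shows "P_op n \<in> clone_gen (C_gens n (\<lambda>x. 2 * q_op n x)) n"
proof -
  let ?K = "clone_gen (C_gens n (\<lambda>x. 2 * q_op n x)) n"
  have q: "(\<lambda>x. 2 * q_op n x) \<in> ?K" by (rule generator_in_C_gens[OF depends_only_on_q_op[OF assms]])
  show ?thesis
  proof (cases "2 \<le> n")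
    case True
    then have n: "0 < n" "1 < n" by auto
    have upd: "(\<lambda>x. 2 * q_op n (x(0 := A x, 1 := B x))) \<in> ?K" if "A \<in> ?K" "B \<in> ?K" for A B
      using clone_gen_fun_upd2[OF q that] .
    have q1: "(\<lambda>x. 2 * q_op n (x(0 := x 1 + 2, 1 := x 0 + 1))) \<in> ?K"
      and q2: "(\<lambda>x. 2 * q_op n (x(0 := x 0 + 2, 1 := x 0 + x 1 + 3))) \<in> ?K"
      and q3: "(\<lambda>x. 2 * q_op n (x(0 := x 0 + x 1 + 2, 1 := x 0 + 3))) \<in> ?K"
      by (intro upd C_gens.add_const_in C_gens.add_in clone_gen.proj n)+
    have polar: "(\<lambda>x. 3 * (2 * q_op n (x(0 := x 1 + 2, 1 := x 0 + 1)))
        + 2 * q_op n (x(0 := x 0 + 2, 1 := x 0 + x 1 + 3))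
        - 2 * q_op n (x(0 := x 0 + x 1 + 2, 1 := x 0 + 3))) = P_op n"
      by (rule ext) (rule P_op_polarization[OF True, symmetric])
    show ?thesis
      using C_gens.diff_in[OF C_gens.add_in[OF C_gens.mult_in[OF q1, of 3] q2] q3] unfolding polar .
  next
    case False
    then have n: "n = 1" using assms by simp
    have "(\<lambda>x. x 0 + x 0) \<in> clone_gen (C_gens 1 (\<lambda>x. 2 * q_op 1 x)) 1"
      by (intro C_gens.add_in clone_gen.proj) simp_all
    then show ?thesis unfolding n P_op_one .
  qed
qed

lemma C_gop_eq_C_w_op:
  assumes "1 \<le> n" and "in_G1 n a b c" and "k < n" and "a k \<noteq> 0"
    and "even (coeff_sum n a b c)"
  shows "C n (gop n a b c) = C n (\<lambda>x. 2 * w_op n x)"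
proof (rule C_eqI)
  show "gop n a b c \<in> clone_gen (C_gens n (\<lambda>x. 2 * w_op n x)) n"
    using C_gens.gop_in_if_even[OF D_op_in_C_gens_w_op[OF assms(1)] _ assms(5)] assms(1) by simp
  have D: "D_op n k \<in> clone_gen (C_gens n (gop n a b c)) n"
    using D_op_in_C_gens_gop[OF assms(1-4)] .
  have "(\<lambda>x. M_op n x - D_op n 0 x) \<in> clone_gen (C_gens n (gop n a b c)) n"
    using assms(1,3) by (intro C_gens.diff_in C_gens.M_op_in[OF D] C_gens.D_op_in_transpose[OF D]) auto
  then show "(\<lambda>x. 2 * w_op n x) \<in> clone_gen (C_gens n (gop n a b c)) n"
    using w_op_eq[OF assms(1)] by simp
qed

lemma C_gop_eq_C_q_op:
  assumes "1 \<le> n" and "in_G1 n a b c" and "k < n" and "a k \<noteq> 0"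
    and "odd (coeff_sum n a b c)"
  shows "C n (gop n a b c) = C n (\<lambda>x. 2 * q_op n x)"
proof (rule C_eqI)
  have P: "P_op n \<in> clone_gen (C_gens n (\<lambda>x. 2 * q_op n x)) n"
    using P_op_in_C_gens_q_op[OF assms(1)] .
  have "(\<lambda>x. P_op n x - 2 * q_op n x) \<in> clone_gen (C_gens n (\<lambda>x. 2 * q_op n x)) n"
    using C_gens.diff_in[OF P generator_in_C_gens[OF depends_only_on_q_op[OF assms(1)]]] .
  then have "D_op n 0 \<in> clone_gen (C_gens n (\<lambda>x. 2 * q_op n x)) n"
    using q_op_eq[OF assms(1)] by simp
  then show "gop n a b c \<in> clone_gen (C_gens n (\<lambda>x. 2 * q_op n x)) n"
    using C_gens.gop_in_if_P_op_in[OF _ _ P] assms(1) by simp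
  have D: "D_op n k \<in> clone_gen (C_gens n (gop n a b c)) n"
    using D_op_in_C_gens_gop[OF assms(1-4)] .
  have "(\<lambda>x. P_op n x - D_op n 0 x) \<in> clone_gen (C_gens n (gop n a b c)) n"
    using assms(1,3)
    by (intro C_gens.diff_in C_gens.P_op_in_if_odd[OF D _ assms(5)] C_gens.D_op_in_transpose[OF D]
        generator_in_C_gens depends_only_on_gop) auto
  then show "(\<lambda>x. 2 * q_op n x) \<in> clone_gen (C_gens n (gop n a b c)) n"
    using q_op_eq[OF assms(1)] by simp
qed

theorem theorem4p1:
  fixes n :: nat and a b :: "nat \<Rightarrow> nat" and c :: nat
  assumes "n \<ge> 1"
    and "in_G1 n a b c"
    and "\<exists>i<n. a i \<noteq> 0"
  shows "(in_G0 n a b c \<longrightarrow> C n (gop n a b c) = C n (\<lambda>x. 2 * w_op n x))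
       \<and> (\<not> in_G0 n a b c \<longrightarrow> C n (gop n a b c) = C n (\<lambda>x. 2 * q_op n x))"
proof -
  obtain k where k: "k < n" "a k \<noteq> 0" using assms(3) by blast
  have "in_G0 n a b c \<longleftrightarrow> even (coeff_sum n a b c)"
    using assms(2) unfolding in_G0_def coeff_sum_def by simp
  then show ?thesis
    using C_gop_eq_C_w_op[OF assms(1,2) k] C_gop_eq_C_q_op[OF assms(1,2) k] by blast
qed

end
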